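(* If $X$ is a Baire space with a locally countable $\pi$-base, then \textsc{Bob} has a winning strategy in the game $\mathsf{BM}_\omega(X)$.
   Context: A Baire space is a space in which countable intersections of dense open sets are dense. A family $\mathcal{B}$ of non-empty open sets of $X$ is a $\pi$-base if every non-empty open set of $X$ contains a member of $\mathcal{B}$; it is locally countable if each member of $\mathcal{B}$ contains only countably many members of $\mathcal{B}$. The game $\mathsf{BM}_\omega(X)$: \textsc{Alice} plays a non-empty open set $A_0$; \textsc{Bob} plays a countable collection $\mathcal{B}_0$ of non-empty open subsets of $A_0$; in inning $n+1$, for each $B \in \mathcal{B}_n$ \textsc{Alice} plays a non-empty open set $A_B \subseteq B$, letting $\mathcal{A}_{n+1}=\{A_B : B\in\mathcal{B}_n\}$, and \textsc{Bob} plays a countable collection $\mathcal{B}_{n+1}$ of non-empty open subsets of $\bigcup\mathcal{A}_{n+1}$. \textsc{Bob} wins if $\bigcap_{n}\bigcup\mathcal{B}_n\neq\emptyset$, otherwise \textsc{Alice} wins. *)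

theory Defs
  imports "HOL-Analysis.Analysis"
begin

text \<open>The space X is the whole type 'a with its topology (class topological_space).\<close>

definition baire_space :: "'a::topological_space itself \<Rightarrow> bool" where
  "baire_space _ \<longleftrightarrow>
     (\<forall>\<F> :: 'a set set. countable \<F> \<and> (\<forall>U\<in>\<F>. open U \<and> closure U = UNIV)
        \<longrightarrow> closure (\<Inter>\<F>) = UNIV)"

definition pi_base :: "'a::topological_space set set \<Rightarrow> bool" where
  "pi_base \<B> \<longleftrightarrow> (\<forall>B\<in>\<B>. open B \<and> B \<noteq> {}) \<and>
     (\<forall>U. open U \<and> U \<noteq> {} \<longrightarrow> (\<exists>B\<in>\<B>. B \<subseteq> U))"

definition locally_countable :: "'a set set \<Rightarrow> bool" where
  "locally_countable \<B> \<longleftrightarrow> (\<forall>B\<in>\<B>. countable {C\<in>\<B>. C \<subseteq> B})"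

text \<open>A strategy for Bob in BM_omega(X): given Alice's initial move A0 and the list
  [f_0, ..., f_(n-1)] of Alice's later moves, it returns Bob's collection B_n.
  Alice's move in inning n+1 is a function f_n assigning to each B in B_n the set A_B = f_n B
  (values outside B_n are irrelevant).\<close>

type_synonym 'a bob_strategy = "'a set \<Rightarrow> ('a set \<Rightarrow> 'a set) list \<Rightarrow> 'a set set"

definition bob_move :: "'a bob_strategy \<Rightarrow> 'a set \<Rightarrow> (nat \<Rightarrow> 'a set \<Rightarrow> 'a set) \<Rightarrow> nat \<Rightarrow> 'a set set" where
  "bob_move \<sigma> A0 f n = \<sigma> A0 (map f [0..<n])"

definition alice_legal :: "'a::topological_space bob_strategy \<Rightarrow> 'a set \<Rightarrow> (nat \<Rightarrow> 'a set \<Rightarrow> 'a set) \<Rightarrow> nat \<Rightarrow> bool" where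
  "alice_legal \<sigma> A0 f n \<longleftrightarrow>
     (\<forall>B\<in>bob_move \<sigma> A0 f n. open (f n B) \<and> f n B \<noteq> {} \<and> f n B \<subseteq> B)"

definition bob_legal :: "'a::topological_space bob_strategy \<Rightarrow> 'a set \<Rightarrow> (nat \<Rightarrow> 'a set \<Rightarrow> 'a set) \<Rightarrow> nat \<Rightarrow> bool" where
  "bob_legal \<sigma> A0 f n \<longleftrightarrow>
     countable (bob_move \<sigma> A0 f n) \<and>
     (\<forall>B\<in>bob_move \<sigma> A0 f n. open B \<and> B \<noteq> {} \<and>
        B \<subseteq> (case n of 0 \<Rightarrow> A0
                     | Suc m \<Rightarrow> \<Union> (f m ` bob_move \<sigma> A0 f m)))"

definition bob_winning_strategy :: "'a::topological_space bob_strategy \<Rightarrow> bool" where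
  "bob_winning_strategy \<sigma> \<longleftrightarrow>
     (\<forall>A0 f. open A0 \<and> A0 \<noteq> {} \<longrightarrow>
        (\<forall>n. (\<forall>k<n. alice_legal \<sigma> A0 f k) \<longrightarrow> bob_legal \<sigma> A0 f n) \<and>
        ((\<forall>n. alice_legal \<sigma> A0 f n) \<longrightarrow> (\<Inter>n. \<Union> (bob_move \<sigma> A0 f n)) \<noteq> {}))"

end

theory Submission
  imports Defs
begin

text \<open>Bob fixes a member S of the \<pi>-base inside A0 and answers every move of Alice with all
  members of the \<pi>-base that lie in S and in one of Alice's sets. As S contains only countably
  many members of the \<pi>-base, these answers are countable; as Alice's sets are non-empty and
  open, the union of each answer is open and dense in S. The Baire property then gives a point
  of S lying in all of these unions.\<close>

lemma baire_space_Inter_dense_in_open: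
  fixes S :: "'a::topological_space set"
  assumes "baire_space TYPE('a)" and "open S" "S \<noteq> {}" and "countable \<F>"
    and "\<And>U. U \<in> \<F> \<Longrightarrow> open U \<and> S \<subseteq> closure U"
  shows "S \<inter> \<Inter>\<F> \<noteq> {}"
proof -
  define \<G> where "\<G> = (\<lambda>U. U \<union> - closure S) ` \<F>"
  have open_dense: "open G \<and> closure G = UNIV" if "G \<in> \<G>" for G
  proof -
    obtain U where U: "U \<in> \<F>" and G: "G = U \<union> - closure S"
      using \<open>G \<in> \<G>\<close> unfolding \<G>_def by blast
    have "closure S \<subseteq> closure U"
      using assms(5)[OF U] by (simp add: closure_minimal)
    then have "closure S \<union> - closure S \<subseteq> closure G"
      using closure_subset[of "- closure S"] unfolding G closure_Un by blast
    moreover have "open G"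
      using assms(5)[OF U] unfolding G by blast
    ultimately show ?thesis
      by blast
  qed
  have "countable \<G>"
    unfolding \<G>_def using assms(4) by simp
  then have "closure (\<Inter>\<G>) = UNIV"
    using assms(1) open_dense unfolding baire_space_def by blast
  then obtain x where "x \<in> S" "x \<in> \<Inter>\<G>"
    using open_Int_closure_eq_empty[OF \<open>open S\<close>, of "\<Inter>\<G>"] \<open>S \<noteq> {}\<close> by blast
  moreover have "x \<in> U" if "U \<in> \<F>" for U
    using \<open>x \<in> \<Inter>\<G>\<close> \<open>x \<in> S\<close> closure_subset[of S] that unfolding \<G>_def by blast
  ultimately show ?thesis
    by blast
qed

lemma pi_base_open_nonempty: "pi_base \<B> \<Longrightarrow> B \<in> \<B> \<Longrightarrow> open B \<and> B \<noteq> {}"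
  unfolding pi_base_def by blast

lemma pi_base_subset_open: "pi_base \<B> \<Longrightarrow> open U \<Longrightarrow> U \<noteq> {} \<Longrightarrow> \<exists>B\<in>\<B>. B \<subseteq> U"
  unfolding pi_base_def by blast

lemma pi_base_SOME_subset:
  assumes "pi_base \<B>" "open A" "A \<noteq> {}"
  shows "(SOME B. B \<in> \<B> \<and> B \<subseteq> A) \<in> \<B> \<and> (SOME B. B \<in> \<B> \<and> B \<subseteq> A) \<subseteq> A"
  using pi_base_subset_open[OF assms] by (metis (mono_tags, lifting) someI_ex)

primrec pi_base_play :: "'a set set \<Rightarrow> 'a set \<Rightarrow> (nat \<Rightarrow> 'a set \<Rightarrow> 'a set) \<Rightarrow> nat \<Rightarrow> 'a set set" where
  "pi_base_play \<B> S f 0 = {C\<in>\<B>. C \<subseteq> S}"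
| "pi_base_play \<B> S f (Suc n) =
     {C\<in>\<B>. C \<subseteq> S \<and> (\<exists>B\<in>pi_base_play \<B> S f n. C \<subseteq> f n B)}"

lemma pi_base_play_cong:
  "(\<And>k. k < n \<Longrightarrow> g k = f k) \<Longrightarrow> pi_base_play \<B> S g n = pi_base_play \<B> S f n"
  by (induction n) auto

lemma pi_base_play_subset: "pi_base_play \<B> S f n \<subseteq> {C\<in>\<B>. C \<subseteq> S}"
  by (cases n) auto

lemma pi_base_play_meets_open:
  assumes "pi_base \<B>"
    and alice: "\<And>k B. k < n \<Longrightarrow> B \<in> pi_base_play \<B> S f k \<Longrightarrow>
                  open (f k B) \<and> f k B \<noteq> {} \<and> f k B \<subseteq> B"
    and "open V" "V \<noteq> {}" "V \<subseteq> S"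
  shows "\<exists>C\<in>pi_base_play \<B> S f n. C \<subseteq> V"
  using alice \<open>open V\<close> \<open>V \<noteq> {}\<close> \<open>V \<subseteq> S\<close>
proof (induction n arbitrary: V)
  case 0
  then obtain C where "C \<in> \<B>" "C \<subseteq> V"
    using pi_base_subset_open[OF \<open>pi_base \<B>\<close>] by blast
  then show ?case
    using \<open>V \<subseteq> S\<close> by auto
next
  case (Suc n)
  then obtain C where C: "C \<in> pi_base_play \<B> S f n" "C \<subseteq> V"
    by (metis less_SucI)
  have fC: "open (f n C)" "f n C \<noteq> {}" "f n C \<subseteq> C"
    using Suc.prems(1)[of n C] C(1) by auto
  then obtain D where D: "D \<in> \<B>" "D \<subseteq> f n C"
    using pi_base_subset_open[OF \<open>pi_base \<B>\<close>] by blast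
  moreover have "C \<subseteq> S"
    using C(1) pi_base_play_subset by blast
  ultimately have "D \<in> pi_base_play \<B> S f (Suc n)"
    using C(1) fC(3) by auto
  moreover have "D \<subseteq> V"
    using C(2) D(2) fC(3) by blast
  ultimately show ?case
    by blast
qed

lemma pi_base_play_dense:
  assumes "pi_base \<B>" "open S"
    and alice: "\<And>k B. k < n \<Longrightarrow> B \<in> pi_base_play \<B> S f k \<Longrightarrow>
                  open (f k B) \<and> f k B \<noteq> {} \<and> f k B \<subseteq> B"
  shows "S \<subseteq> closure (\<Union> (pi_base_play \<B> S f n))"
proof
  fix x assume "x \<in> S"
  let ?P = "\<Union> (pi_base_play \<B> S f n)"
  show "x \<in> closure ?P"
  proof (rule ccontr)
    assume "x \<notin> closure ?P"
    then have nonempty: "S - closure ?P \<noteq> {}"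
      using \<open>x \<in> S\<close> by blast
    have "open (S - closure ?P)"
      using \<open>open S\<close> by (simp add: open_Diff)
    then obtain C where C: "C \<in> pi_base_play \<B> S f n" "C \<subseteq> S - closure ?P"
      using pi_base_play_meets_open[where n=n and f=f, OF assms(1) alice _ nonempty Diff_subset]
      by blast
    then have "C \<noteq> {}"
      using pi_base_play_subset[of \<B> S f n] pi_base_open_nonempty[OF assms(1)] by blast
    with C show False
      using closure_subset[of ?P] by blast
  qed
qed

definition pi_base_strategy :: "'a set set \<Rightarrow> 'a bob_strategy" where
  "pi_base_strategy \<B> A0 fs =
     pi_base_play \<B> (SOME B. B \<in> \<B> \<and> B \<subseteq> A0) (\<lambda>k. fs ! k) (length fs)"

lemma bob_move_pi_base_strategy:
  "bob_move (pi_base_strategy \<B>) A0 f n = pi_base_play \<B> (SOME B. B \<in> \<B> \<and> B \<subseteq> A0) f n"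
  unfolding bob_move_def pi_base_strategy_def
  by (simp add: pi_base_play_cong[of n "\<lambda>k. map f [0..<n] ! k" f])

lemma bob_legal_pi_base_strategy:
  assumes "pi_base \<B>" "locally_countable \<B>" "open A0" "A0 \<noteq> {}"
  shows "bob_legal (pi_base_strategy \<B>) A0 f n"
proof -
  define S where "S = (SOME B. B \<in> \<B> \<and> B \<subseteq> A0)"
  have S: "S \<in> \<B>" "S \<subseteq> A0"
    using pi_base_SOME_subset[OF assms(1,3,4)] unfolding S_def by auto
  have "countable (pi_base_play \<B> S f n)"
    using assms(2) S(1) pi_base_play_subset countable_subset
    unfolding locally_countable_def by metis
  moreover have "open C \<and> C \<noteq> {} \<and> C \<subseteq> (case n of 0 \<Rightarrow> A0
                   | Suc m \<Rightarrow> \<Union> (f m ` pi_base_play \<B> S f m))"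
    if "C \<in> pi_base_play \<B> S f n" for C
    using that pi_base_open_nonempty[OF assms(1)] S(2) pi_base_play_subset[of \<B> S f n]
    by (cases n) auto
  ultimately show ?thesis
    unfolding bob_legal_def bob_move_pi_base_strategy S_def by blast
qed

lemma pi_base_strategy_wins:
  fixes \<B> :: "'a::topological_space set set"
  assumes "baire_space TYPE('a)" "pi_base \<B>" "open A0" "A0 \<noteq> {}"
    and "\<And>n. alice_legal (pi_base_strategy \<B>) A0 f n"
  shows "(\<Inter>n. \<Union> (bob_move (pi_base_strategy \<B>) A0 f n)) \<noteq> {}"
proof -
  define S where "S = (SOME B. B \<in> \<B> \<and> B \<subseteq> A0)"
  have S: "open S" "S \<noteq> {}"
    using pi_base_SOME_subset[OF assms(2-4)] pi_base_open_nonempty[OF assms(2)]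
    unfolding S_def by auto
  have alice: "open (f k B) \<and> f k B \<noteq> {} \<and> f k B \<subseteq> B"
    if "B \<in> pi_base_play \<B> S f k" for k B
    using assms(5)[of k] that unfolding alice_legal_def bob_move_pi_base_strategy S_def by blast
  have "open (\<Union> (pi_base_play \<B> S f n))" for n
    using pi_base_play_subset pi_base_open_nonempty[OF assms(2)] by (intro open_Union) blast
  moreover have "S \<subseteq> closure (\<Union> (pi_base_play \<B> S f n))" for n
    using pi_base_play_dense[where n=n and f=f, OF assms(2) S(1) alice] .
  ultimately have "S \<inter> (\<Inter>n. \<Union> (pi_base_play \<B> S f n)) \<noteq> {}"
    by (intro baire_space_Inter_dense_in_open[OF assms(1) S]) auto
  then show ?thesis
    unfolding bob_move_pi_base_strategy S_def[symmetric] by blast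
qed

theorem theorem3p8:
  fixes \<B> :: "'a::topological_space set set"
  assumes "baire_space TYPE('a)"
    and "pi_base \<B>"
    and "locally_countable \<B>"
  shows "\<exists>\<sigma> :: 'a bob_strategy. bob_winning_strategy \<sigma>"
  unfolding bob_winning_strategy_def
  using bob_legal_pi_base_strategy[OF assms(2,3)] pi_base_strategy_wins[OF assms(1,2)]
  by blast

end
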